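(* Let $R$ be a commutative ring equipped with an exhaustive $\Gamma$-filtration $FR=\{F_\gamma R\}_{\gamma\in\Gamma}$, and put $R_0=F_0R$ (a subring of $R$ containing $1$). Let $R\langle X\rangle=R\langle X_1,\dots,X_n\rangle$ and let $\mathcal I$ be an ideal of $R\langle X\rangle$ generated by a subset $\mathcal G\subset R_0\langle X\rangle=R_0\langle X_1,\dots,X_n\rangle$ which is a monic Gröbner basis of $\mathcal I$ in $R\langle X\rangle$ with respect to a monomial ordering $\prec$ on $\mathcal B_R$, with $\mathrm{LM}(g)\neq 1$ for every $g\in\mathcal G$. Let $A=R\langle X\rangle/\mathcal I$ and let $\overline{N(\mathcal G)}$ be the image of $N(\mathcal G)$ in $A$. For $\gamma\in\Gamma$ put $$F_\gamma A=\Big\{a=\textstyle\sum_i\lambda_i\bar w_i \;\Big|\; \lambda_i\in F_\gamma R,\ \bar w_i\in\overline{N(\mathcal G)}\Big\}.$$ Then $FA=\{F_\gamma A\}_{\gamma\in\Gamma}$ is an exhaustive $\Gamma$-filtration of $A$, and $F_\gamma R=R\cap F_\gamma A$ for every $\gamma\in\Gamma$ (where $R$ is identified with its image $R\cdot\bar 1$ in $A$).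
   Context: $\Gamma$ is a totally ordered (not necessarily commutative) monoid with ordering $<$, whose operation is written $+$ and neutral element $0$. An exhaustive $\Gamma$-filtration of a ring $S$ is a family $\{F_\gamma S\}_{\gamma\in\Gamma}$ of additive subgroups with (F1) $S=\bigcup_\gamma F_\gamma S$; (F2) $F_{\gamma_1}S\subseteq F_{\gamma_2}S$ whenever $\gamma_1<\gamma_2$; (F3) $F_\gamma S\cdot F_\tau S\subseteq F_{\gamma+\tau}S$; (F4) $1\in F_0S$. For a commutative ring $D$, $D\langle X\rangle=D\langle X_1,\dots,X_n\rangle$ is the free $D$-algebra, with standard $D$-basis $\mathcal B_D$ of words in $X_1,\dots,X_n$ (empty word $=1$). A monomial ordering is a well-ordering $\prec$ on words such that $u\prec v$ implies $wus\prec wvs$, and $w=uv$ implies $u\preceq w$, $v\preceq w$. For nonzero $f=\sum\lambda_iw_i$ ($\lambda_i\neq0$, $w_1\prec\dots\prec w_s$), $\mathrm{LM}(f)=w_s$ and $\mathrm{LC}(f)=\lambda_s$. A set $G$ is monic if $\mathrm{LC}(g)=1$ for all $g\in G$. A word $v$ divides $u$ if $u=wvs$ for words $w,s$. A monic Gröbner basis of an ideal $I$ is a monic subset $\mathcal G\subset I$ such that for every nonzero $f\in I$ there is $g\in\mathcal G$ with $\mathrm{LM}(g)\mid\mathrm{LM}(f)$. $N(\mathcal G)$ is the set of words not divisible by $\mathrm{LM}(g)$ for any $g\in\mathcal G$; when $\mathcal G$ is a monic Gröbner basis of $I$, $\overline{N(\mathcal G)}$ is a free $R$-basis of $R\langle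 X\rangle/I$. *)

theory Defs
  imports "HOL-Library.Poly_Mapping" "HOL-Algebra.QuotRing"
begin

definition exh_filtration ::
  "('a, 'b) ring_scheme \<Rightarrow> ('g::{monoid_add, linorder} \<Rightarrow> 'a set) \<Rightarrow> bool" where
  "exh_filtration S F \<longleftrightarrow>
     (\<forall>\<gamma>. additive_subgroup (F \<gamma>) S) \<and>
     carrier S = (\<Union>\<gamma>. F \<gamma>) \<and>
     (\<forall>\<gamma>1 \<gamma>2. \<gamma>1 < \<gamma>2 \<longrightarrow> F \<gamma>1 \<subseteq> F \<gamma>2) \<and>
     (\<forall>\<gamma> \<tau>. \<forall>x \<in> F \<gamma>. \<forall>y \<in> F \<tau>. x \<otimes>\<^bsub>S\<^esub> y \<in> F (\<gamma> + \<tau>)) \<and>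
     \<one>\<^bsub>S\<^esub> \<in> F 0"

definition totally_ordered_monoid :: "'g::{monoid_add, linorder} itself \<Rightarrow> bool" where
  "totally_ordered_monoid _ \<longleftrightarrow>
     (\<forall>a b c :: 'g. a \<le> b \<longrightarrow> a + c \<le> b + c \<and> c + a \<le> c + b)"

definition tc_ring :: "'a::ring_1 ring" where
  "tc_ring = \<lparr>carrier = UNIV, mult = (*), one = 1, zero = 0, add = (+)\<rparr>"

text \<open>Words in the letters of type 'v (the variables X_1..X_n); concatenation is
  written as +, the empty word (=1) is 0.\<close>

datatype 'v word = Word "'v list"

instantiation word :: (type) monoid_add
begin
definition zero_word :: "'v word" where "zero_word = Word []"
fun plus_word :: "'v word \<Rightarrow> 'v word \<Rightarrow> 'v word" where
  "plus_word (Word u) (Word v) = Word (u @ v)"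
instance
proof
  fix a b c :: "'v word"
  show "a + b + c = a + (b + c)" by (cases a; cases b; cases c) simp
  show "0 + a = a" by (cases a) (simp add: zero_word_def)
  show "a + 0 = a" by (cases a) (simp add: zero_word_def)
qed
end

text \<open>The free algebra D<X_1,...,X_n> with D-basis the words:
  finitely supported functions from words to D, with convolution product.\<close>

type_synonym ('v, 'r) free_alg = "'v word \<Rightarrow>\<^sub>0 'r"

definition word_dvd :: "'v word \<Rightarrow> 'v word \<Rightarrow> bool" where
  "word_dvd v u \<longleftrightarrow> (\<exists>w s. u = w + v + s)"

definition monomial_ordering :: "('v word \<Rightarrow> 'v word \<Rightarrow> bool) \<Rightarrow> bool" where
  "monomial_ordering lt \<longleftrightarrow>
     (\<forall>u. \<not> lt u u) \<and>
     (\<forall>u v w. lt u v \<longrightarrow> lt v w \<longrightarrow> lt u w) \<and>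
     (\<forall>u v. u \<noteq> v \<longrightarrow> lt u v \<or> lt v u) \<and>
     wfP lt \<and>
     (\<forall>u v w s. lt u v \<longrightarrow> lt (w + u + s) (w + v + s)) \<and>
     (\<forall>u v. (lt u (u + v) \<or> u = u + v) \<and> (lt v (u + v) \<or> v = u + v))"

definition LM :: "('v word \<Rightarrow> 'v word \<Rightarrow> bool) \<Rightarrow> ('v, 'r::zero) free_alg \<Rightarrow> 'v word" where
  "LM lt f = (THE w. w \<in> Poly_Mapping.keys f \<and> (\<forall>v \<in> Poly_Mapping.keys f. v \<noteq> w \<longrightarrow> lt v w))"

definition LC :: "('v word \<Rightarrow> 'v word \<Rightarrow> bool) \<Rightarrow> ('v, 'r::zero) free_alg \<Rightarrow> 'r" where
  "LC lt f = Poly_Mapping.lookup f (LM lt f)"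

definition monic_groebner_basis ::
  "('v word \<Rightarrow> 'v word \<Rightarrow> bool) \<Rightarrow> ('v, 'r::{zero,one}) free_alg set \<Rightarrow> ('v, 'r) free_alg set \<Rightarrow> bool" where
  "monic_groebner_basis lt G I \<longleftrightarrow>
     G \<subseteq> I \<and> (\<forall>g \<in> G. g \<noteq> 0 \<and> LC lt g = 1) \<and>
     (\<forall>f \<in> I. f \<noteq> 0 \<longrightarrow> (\<exists>g \<in> G. word_dvd (LM lt g) (LM lt f)))"

definition normal_words :: "('v word \<Rightarrow> 'v word \<Rightarrow> bool) \<Rightarrow> ('v, 'r::zero) free_alg set \<Rightarrow> 'v word set" where
  "normal_words lt G = {w. \<forall>g \<in> G. \<not> word_dvd (LM lt g) w}"

end

theory Submission
  imports Defs
begin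

(*
  For an
  additive subgroup F of R write combinations_in N F for the polynomials with
  coefficients in F supported on the normal words N = N(G).  The defining set
  F_gamma A of the theorem is exactly the image of combinations_in N (F_gamma R)
  in A = R<X>/I.  Two facts about G drive everything:
   (a) independence: a polynomial in I supported on N is zero, because its
       leading word would be divisible by some LM(g);
   (b) reduction: if F is stable under multiplication by the coefficients of
       G, every polynomial with coefficients in F is congruent modulo I to an
       element of combinations_in N F.  This is well-founded induction along the
       monomial ordering: a non-normal word u = w LM(g) s is replaced using the
       monic multiple w g s, whose other words are smaller than u.
  Since the coefficients of G lie in F_0 R, (b) applies to every F_gamma R.
  The filtration axioms for F A then follow from those of F R together with
  (b) (exhaustiveness, products), and F_gamma R = R \<inter> F_gamma A follows from (a).
*)

lemma tc_ring_simps [simp]: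
  "carrier (tc_ring :: 'a::ring_1 ring) = UNIV"
  "mult (tc_ring :: 'a::ring_1 ring) = (*)"
  "add (tc_ring :: 'a::ring_1 ring) = (+)"
  "one (tc_ring :: 'a::ring_1 ring) = 1"
  "zero (tc_ring :: 'a::ring_1 ring) = 0"
  by (simp_all add: tc_ring_def)

lemma tc_ring_is_ring: "ring (tc_ring :: 'a::ring_1 ring)"
proof (rule ringI)
  show "abelian_group (tc_ring :: 'a ring)"
    by (rule abelian_groupI) (auto simp: algebra_simps intro: exI[of _ "- _"])
  show "monoid (tc_ring :: 'a ring)"
    by (rule monoidI) (auto simp: algebra_simps)
qed (auto simp: algebra_simps)

lemma tc_a_inv [simp]: "a_inv (tc_ring :: 'a::ring_1 ring) x = - x"
proof -
  interpret ring "tc_ring :: 'a ring" by (rule tc_ring_is_ring)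
  show ?thesis by (rule minus_equality) auto
qed

lemma tc_a_minus [simp]: "a_minus (tc_ring :: 'a::ring_1 ring) x y = x - y"
  by (simp add: a_minus_def)

lemma tc_additive_subgroup_iff:
  "additive_subgroup S (tc_ring :: 'a::ring_1 ring) \<longleftrightarrow>
     0 \<in> S \<and> (\<forall>x\<in>S. \<forall>y\<in>S. x + y \<in> S) \<and> (\<forall>x\<in>S. - x \<in> S)"
proof
  assume "additive_subgroup S (tc_ring :: 'a ring)"
  then interpret additive_subgroup S "tc_ring :: 'a ring" .
  show "0 \<in> S \<and> (\<forall>x\<in>S. \<forall>y\<in>S. x + y \<in> S) \<and> (\<forall>x\<in>S. - x \<in> S)"
    using zero_closed a_closed a_inv_closed by simp
next
  assume S: "0 \<in> S \<and> (\<forall>x\<in>S. \<forall>y\<in>S. x + y \<in> S) \<and> (\<forall>x\<in>S. - x \<in> S)"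
  have "subgroup S (add_monoid (tc_ring :: 'a ring))"
  proof
    fix x assume "x \<in> S"
    then show "inv\<^bsub>add_monoid (tc_ring :: 'a ring)\<^esub> x \<in> S"
      using S tc_a_inv[of x] unfolding a_inv_def by simp
  qed (use S in auto)
  then show "additive_subgroup S (tc_ring :: 'a ring)"
    by (rule additive_subgroupI)
qed

lemma tc_ideal_closed:
  assumes "ideal I (tc_ring :: 'a::ring_1 ring)"
  shows "0 \<in> I" "a \<in> I \<Longrightarrow> b \<in> I \<Longrightarrow> a + b \<in> I" "a \<in> I \<Longrightarrow> - a \<in> I"
    "a \<in> I \<Longrightarrow> b \<in> I \<Longrightarrow> a - b \<in> I"
    "a \<in> I \<Longrightarrow> x * a * y \<in> I"
proof -
  interpret ideal I "tc_ring :: 'a ring" by fact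
  have sub: "0 \<in> I \<and> (\<forall>x\<in>I. \<forall>y\<in>I. x + y \<in> I) \<and> (\<forall>x\<in>I. - x \<in> I)"
    using is_additive_subgroup tc_additive_subgroup_iff by blast
  then show "0 \<in> I" "a \<in> I \<Longrightarrow> b \<in> I \<Longrightarrow> a + b \<in> I" "a \<in> I \<Longrightarrow> - a \<in> I"
    by simp_all
  show "a \<in> I \<Longrightarrow> b \<in> I \<Longrightarrow> a - b \<in> I"
    using sub by (metis diff_conv_add_uminus)
  show "a \<in> I \<Longrightarrow> x * a * y \<in> I"
    using I_l_closed I_r_closed by simp
qed

lemma tc_ideal_sum:
  assumes "ideal I (tc_ring :: 'a::ring_1 ring)" "\<And>x. x \<in> A \<Longrightarrow> f x \<in> I"
  shows "sum f A \<in> I"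
  using assms(2)
  by (induction A rule: infinite_finite_induct) (auto intro: tc_ideal_closed[OF assms(1)])

lemma tc_coset_eq_iff:
  assumes "ideal I (tc_ring :: 'a::ring_1 ring)"
  shows "I +>\<^bsub>tc_ring :: 'a ring\<^esub> a = I +>\<^bsub>tc_ring :: 'a ring\<^esub> b \<longleftrightarrow> a - b \<in> I"
proof -
  interpret ideal I "tc_ring :: 'a ring" by fact
  show ?thesis
    by (metis UNIV_I a_rcos_module_minus a_repr_independence' a_repr_independenceD
        ring_axioms tc_a_minus tc_ring_simps(1))
qed

lemma tc_quotient_carrier:
  "carrier ((tc_ring :: 'a::ring_1 ring) Quot I) = range (\<lambda>h. I +>\<^bsub>tc_ring :: 'a ring\<^esub> h)"
  unfolding FactRing_def A_RCOSETS_def' by auto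

lemma quotient_image_additive_subgroup:
  assumes "ideal I R" and "additive_subgroup S R"
  shows "additive_subgroup ((\<lambda>h. I +>\<^bsub>R\<^esub> h) ` S) (R Quot I)"
proof -
  have "subgroup S (add_monoid R)"
    using assms(2) by (rule additive_subgroup.a_subgroup)
  then have "subgroup ((\<lambda>h. I +>\<^bsub>R\<^esub> h) ` S) (add_monoid (R Quot I))"
    by (rule ring_hom_ring.img_is_add_subgroup[OF ideal.rcos_ring_hom_ring[OF assms(1)]])
  then show ?thesis by (rule additive_subgroupI)
qed

text \<open>The functions with all coefficients in F and support inside W; for W the
  normal words these are the representatives of the filtration pieces of A.\<close>

definition combinations_in :: "'k set \<Rightarrow> 'r::zero set \<Rightarrow> ('k \<Rightarrow>\<^sub>0 'r) set" where
  "combinations_in W F = {h. (\<forall>u. Poly_Mapping.lookup h u \<in> F) \<and> Poly_Mapping.keys h \<subseteq> W}"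

lemma monomial_expansion:
  "f = (\<Sum>k\<in>Poly_Mapping.keys f. Poly_Mapping.single k (Poly_Mapping.lookup f k))"
proof (rule poly_mapping_eqI)
  fix j
  have "(\<Sum>k\<in>Poly_Mapping.keys f.
          Poly_Mapping.lookup (Poly_Mapping.single k (Poly_Mapping.lookup f k)) j)
      = (\<Sum>k\<in>Poly_Mapping.keys f. if j = k then Poly_Mapping.lookup f k else 0)"
    by (rule sum.cong) (auto simp: lookup_single)
  also have "\<dots> = Poly_Mapping.lookup f j"
    by (simp add: in_keys_iff)
  finally show "Poly_Mapping.lookup f j = Poly_Mapping.lookup
      (\<Sum>k\<in>Poly_Mapping.keys f. Poly_Mapping.single k (Poly_Mapping.lookup f k)) j"
    by (simp add: lookup_sum)
qed

lemma sum_in_additive_closed: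
  assumes "0 \<in> F" and "\<And>x y. x \<in> F \<Longrightarrow> y \<in> F \<Longrightarrow> x + y \<in> F"
    and "\<And>x. x \<in> A \<Longrightarrow> f x \<in> F"
  shows "sum f A \<in> F"
  using assms(3) by (induction A rule: infinite_finite_induct) (auto simp: assms(1,2))

lemma combinations_in_single:
  "0 \<in> F \<Longrightarrow> c \<in> F \<Longrightarrow> u \<in> W \<Longrightarrow> Poly_Mapping.single u c \<in> combinations_in W F"
  by (auto simp: combinations_in_def lookup_single when_def)

lemma combinations_in_mono:
  "F \<subseteq> F' \<Longrightarrow> combinations_in W F \<subseteq> combinations_in W F'"
  unfolding combinations_in_def by blast

lemma combinations_in_additive_subgroup:
  fixes F :: "'r::ring_1 set"
  assumes "additive_subgroup F (tc_ring :: 'r ring)"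
  shows "additive_subgroup (combinations_in W F) (tc_ring :: ('k::monoid_add \<Rightarrow>\<^sub>0 'r) ring)"
proof -
  have F: "0 \<in> F" "\<And>x y. x \<in> F \<Longrightarrow> y \<in> F \<Longrightarrow> x + y \<in> F" "\<And>x. x \<in> F \<Longrightarrow> - x \<in> F"
    using assms tc_additive_subgroup_iff by blast+
  have "a + b \<in> combinations_in W F"
    if "a \<in> combinations_in W F" "b \<in> combinations_in W F" for a b
    using that keys_add[of a b] by (auto simp: combinations_in_def lookup_add F(2))
  then show ?thesis
    unfolding tc_additive_subgroup_iff by (auto simp: combinations_in_def F(1,3))
qed

lemma indexed_sums_eq_combinations_in:
  fixes F :: "'r::comm_monoid_add set"
  assumes F0: "0 \<in> F" and Fadd: "\<And>x y. x \<in> F \<Longrightarrow> y \<in> F \<Longrightarrow> x + y \<in> F"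
  shows "{a. \<exists>(k::nat) c w. (\<forall>i<k. c i \<in> F \<and> w i \<in> W) \<and>
            a = \<phi> (\<Sum>i<k. Poly_Mapping.single (w i) (c i))}
       = \<phi> ` combinations_in W F"
proof (intro equalityI subsetI)
  fix a assume "a \<in> {a. \<exists>(k::nat) c w. (\<forall>i<k. c i \<in> F \<and> w i \<in> W) \<and>
            a = \<phi> (\<Sum>i<k. Poly_Mapping.single (w i) (c i))}"
  then obtain k :: nat and c w where cw: "\<forall>i<k. c i \<in> F \<and> w i \<in> W"
    and a: "a = \<phi> (\<Sum>i<k. Poly_Mapping.single (w i) (c i))"
    by blast
  have "Poly_Mapping.lookup (\<Sum>i<k. Poly_Mapping.single (w i) (c i)) u \<in> F" for u
    unfolding lookup_sum
    by (rule sum_in_additive_closed[OF F0 Fadd]) (use cw in \<open>auto simp: lookup_single when_def F0\<close>)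
  moreover have "Poly_Mapping.keys (\<Sum>i<k. Poly_Mapping.single (w i) (c i)) \<subseteq> W"
    using keys_sum[of "\<lambda>i. Poly_Mapping.single (w i) (c i)" "{..<k}"] cw
    by (auto split: if_splits)
  ultimately show "a \<in> \<phi> ` combinations_in W F"
    unfolding a combinations_in_def by blast
next
  fix a assume "a \<in> \<phi> ` combinations_in W F"
  then obtain h where h: "h \<in> combinations_in W F" and a: "a = \<phi> h"
    by (rule imageE)
  obtain xs where xs: "set xs = Poly_Mapping.keys h" "distinct xs"
    using finite_distinct_list[OF finite_keys[of h]] by metis
  have "h = (\<Sum>k\<in>Poly_Mapping.keys h. Poly_Mapping.single k (Poly_Mapping.lookup h k))"
    by (rule monomial_expansion)
  also have "\<dots> = (\<Sum>i<length xs. Poly_Mapping.single (xs ! i) (Poly_Mapping.lookup h (xs ! i)))"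
    by (rule sum.reindex_bij_betw[symmetric], rule bij_betw_nth[OF xs(2) refl xs(1)[symmetric]])
  finally have a_sum: "a = \<phi> (\<Sum>i<length xs. Poly_Mapping.single (xs ! i) (Poly_Mapping.lookup h (xs ! i)))"
    unfolding a by simp
  have terms: "\<forall>i<length xs. Poly_Mapping.lookup h (xs ! i) \<in> F \<and> xs ! i \<in> W"
    using h xs(1) nth_mem unfolding combinations_in_def by blast
  show "a \<in> {a. \<exists>(k::nat) c w. (\<forall>i<k. c i \<in> F \<and> w i \<in> W) \<and>
            a = \<phi> (\<Sum>i<k. Poly_Mapping.single (w i) (c i))}"
    unfolding mem_Collect_eq
    by (rule exI[of _ "length xs"], rule exI[of _ "\<lambda>i. Poly_Mapping.lookup h (xs ! i)"],
        rule exI[of _ "(!) xs"], rule conjI[OF terms a_sum])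
qed

lemma lookup_mult_in:
  fixes p q :: "'k::monoid_add \<Rightarrow>\<^sub>0 'r::ring_1"
  assumes H0: "0 \<in> H" and Hadd: "\<And>x y. x \<in> H \<Longrightarrow> y \<in> H \<Longrightarrow> x + y \<in> H"
    and mult: "\<And>x y. x \<in> Fp \<Longrightarrow> y \<in> Fq \<Longrightarrow> x * y \<in> H"
    and p: "\<And>u. Poly_Mapping.lookup p u \<in> Fp" and q: "\<And>u. Poly_Mapping.lookup q u \<in> Fq"
  shows "Poly_Mapping.lookup (p * q) u \<in> H"
proof -
  have "p * q = (\<Sum>k\<in>Poly_Mapping.keys p. \<Sum>l\<in>Poly_Mapping.keys q.
      Poly_Mapping.single (k + l) (Poly_Mapping.lookup p k * Poly_Mapping.lookup q l))"
    by (subst monomial_expansion[of p], subst monomial_expansion[of q])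
      (simp add: sum_distrib_left sum_distrib_right mult_single, rule sum.swap)
  then show ?thesis
    using p q
    by (auto simp: lookup_sum lookup_single when_def H0
        intro!: sum_in_additive_closed[OF H0 Hadd] mult)
qed

lemma monomial_orderingD:
  assumes "monomial_ordering lt"
  shows "\<forall>u. \<not> lt u u" "\<forall>u v w. lt u v \<longrightarrow> lt v w \<longrightarrow> lt u w"
    "\<forall>u v. u \<noteq> v \<longrightarrow> lt u v \<or> lt v u" "wfP lt"
    "\<forall>u v w s. lt u v \<longrightarrow> lt (w + u + s) (w + v + s)"
  using assms unfolding monomial_ordering_def by blast+

lemma strict_total_order_unique_max:
  assumes irr: "\<forall>u. \<not> lt u u" and tr: "\<forall>u v w. lt u v \<longrightarrow> lt v w \<longrightarrow> lt u w"
    and tot: "\<forall>u v. u \<noteq> v \<longrightarrow> lt u v \<or> lt v u"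
    and fin: "finite K" and ne: "K \<noteq> {}"
  shows "\<exists>!w. w \<in> K \<and> (\<forall>v \<in> K. v \<noteq> w \<longrightarrow> lt v w)"
proof -
  have "\<exists>w. w \<in> K \<and> (\<forall>v \<in> K. v \<noteq> w \<longrightarrow> lt v w)"
    using fin ne
  proof (induction K rule: finite_ne_induct)
    case (singleton x)
    then show ?case by auto
  next
    case (insert x F)
    then obtain m where m: "m \<in> F" "\<forall>v \<in> F. v \<noteq> m \<longrightarrow> lt v m" by blast
    show ?case
    proof (cases "lt m x")
      case True
      then have "\<forall>v \<in> insert x F. v \<noteq> x \<longrightarrow> lt v x"
        using m(2) tr by (metis insertE)
      then show ?thesis by blast
    next
      case False
      then show ?thesis
        using m tot by (intro exI[of _ m]) auto
    qed
  qed
  moreover have "w1 = w2"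
    if "w1 \<in> K \<and> (\<forall>v \<in> K. v \<noteq> w1 \<longrightarrow> lt v w1)"
       "w2 \<in> K \<and> (\<forall>v \<in> K. v \<noteq> w2 \<longrightarrow> lt v w2)" for w1 w2
    using that irr tr by metis
  ultimately show ?thesis by blast
qed

lemma LM_greatest:
  assumes ord: "monomial_ordering lt" and f: "f \<noteq> 0"
  shows "LM lt f \<in> Poly_Mapping.keys f"
    and "\<And>v. v \<in> Poly_Mapping.keys f \<Longrightarrow> v \<noteq> LM lt f \<Longrightarrow> lt v (LM lt f)"
proof -
  have "\<exists>!w. w \<in> Poly_Mapping.keys f \<and> (\<forall>v \<in> Poly_Mapping.keys f. v \<noteq> w \<longrightarrow> lt v w)"
    by (rule strict_total_order_unique_max[OF monomial_orderingD(1-3)[OF ord]]) (use f in auto)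
  from theI'[OF this]
  show "LM lt f \<in> Poly_Mapping.keys f"
    and "\<And>v. v \<in> Poly_Mapping.keys f \<Longrightarrow> v \<noteq> LM lt f \<Longrightarrow> lt v (LM lt f)"
    unfolding LM_def by blast+
qed

lemma shifted_lower_word:
  assumes ord: "monomial_ordering lt" and "f \<noteq> 0"
    and "v \<in> Poly_Mapping.keys f" "v \<noteq> LM lt f"
  shows "lt (w + v + s) (w + LM lt f + s)"
  using LM_greatest(2)[OF ord assms(2-4)] monomial_orderingD(5)[OF ord] by blast

lemma empty_word_normal:
  fixes G :: "('v, 'r::zero) free_alg set"
  assumes "\<forall>g \<in> G. LM lt g \<noteq> 0"
  shows "0 \<in> normal_words lt G"
proof -
  have "u = 0" if dvd: "word_dvd u (0 :: 'v word)" for u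
  proof -
    obtain w s where "0 = w + u + s" using dvd unfolding word_dvd_def by blast
    then show "u = 0" by (cases w; cases u; cases s) (simp add: zero_word_def)
  qed
  then show ?thesis using assms unfolding normal_words_def by blast
qed

section \<open>Normal words modulo a monic Groebner basis\<close>

lemma normal_in_ideal_eq_zero:
  assumes ord: "monomial_ordering lt" and GB: "monic_groebner_basis lt G I"
    and fI: "f \<in> I" and keys: "Poly_Mapping.keys f \<subseteq> normal_words lt G"
  shows "f = 0"
proof (rule ccontr)
  assume "f \<noteq> 0"
  then have "LM lt f \<in> normal_words lt G"
    using LM_greatest(1)[OF ord] keys by blast
  moreover obtain g where "g \<in> G" "word_dvd (LM lt g) (LM lt f)"
    using GB fI \<open>f \<noteq> 0\<close> unfolding monic_groebner_basis_def by blast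
  ultimately show False unfolding normal_words_def by blast
qed

lemma monic_multiple_expansion:
  fixes g :: "('v, 'r::ring_1) free_alg"
  assumes m: "m \<in> Poly_Mapping.keys g" and LC: "Poly_Mapping.lookup g m = 1"
  shows "Poly_Mapping.single w c * g * Poly_Mapping.single s 1
       = Poly_Mapping.single (w + m + s) c
         + (\<Sum>v\<in>Poly_Mapping.keys g - {m}.
              Poly_Mapping.single (w + v + s) (c * Poly_Mapping.lookup g v))"
proof -
  have "Poly_Mapping.single w c * g * Poly_Mapping.single s 1
      = (\<Sum>v\<in>Poly_Mapping.keys g. Poly_Mapping.single w c
           * Poly_Mapping.single v (Poly_Mapping.lookup g v) * Poly_Mapping.single s 1)"
    by (subst monomial_expansion[of g]) (simp add: sum_distrib_left sum_distrib_right)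
  also have "\<dots> = (\<Sum>v\<in>Poly_Mapping.keys g.
      Poly_Mapping.single (w + v + s) (c * Poly_Mapping.lookup g v))"
    by (simp add: mult_single)
  also have "\<dots> = Poly_Mapping.single (w + m + s) c
      + (\<Sum>v\<in>Poly_Mapping.keys g - {m}.
           Poly_Mapping.single (w + v + s) (c * Poly_Mapping.lookup g v))"
    using m LC by (simp add: sum.remove)
  finally show ?thesis .
qed

context
  fixes lt :: "'v word \<Rightarrow> 'v word \<Rightarrow> bool"
    and G :: "('v, 'r::ring_1) free_alg set"
    and I :: "('v, 'r) free_alg set"
    and F :: "'r set"
  assumes ord: "monomial_ordering lt"
    and ideal: "ideal I (tc_ring :: ('v, 'r) free_alg ring)"
    and G_in_I: "G \<subseteq> I"
    and monic: "\<forall>g \<in> G. g \<noteq> 0 \<and> LC lt g = 1"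
    and F: "additive_subgroup F (tc_ring :: 'r ring)"
    and F_mult: "\<forall>c \<in> F. \<forall>g \<in> G. \<forall>v. c * Poly_Mapping.lookup g v \<in> F"
begin

text \<open>A sum of polynomials, each congruent to a normal combination, is congruent
  to a normal combination: normal combinations plus I form an additive subgroup.\<close>

lemma sum_reduces:
  assumes "\<And>x. x \<in> A \<Longrightarrow> \<exists>h \<in> combinations_in (normal_words lt G) F. f x - h \<in> I"
  shows "\<exists>h \<in> combinations_in (normal_words lt G) F. sum f A - h \<in> I"
proof -
  let ?N = "combinations_in (normal_words lt G) F"
  have "\<forall>x\<in>A. \<exists>h. h \<in> ?N \<and> f x - h \<in> I"
    using assms by blast
  then obtain H where H: "\<forall>x\<in>A. H x \<in> ?N \<and> f x - H x \<in> I"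
    by (rule bchoice[THEN exE])
  have N: "0 \<in> ?N \<and> (\<forall>x\<in>?N. \<forall>y\<in>?N. x + y \<in> ?N)"
    using combinations_in_additive_subgroup[OF F] unfolding tc_additive_subgroup_iff by blast
  have "sum H A \<in> ?N"
    by (rule sum_in_additive_closed) (use N H in blast)+
  moreover have "(\<Sum>x\<in>A. f x - H x) \<in> I"
    by (rule tc_ideal_sum[OF ideal]) (use H in blast)
  then have "sum f A - sum H A \<in> I"
    by (simp add: sum_subtractf)
  ultimately show ?thesis
    by blast
qed

lemma monomial_reduces:
  "c \<in> F \<Longrightarrow> \<exists>h \<in> combinations_in (normal_words lt G) F. Poly_Mapping.single u c - h \<in> I"
proof (induction u arbitrary: c rule: wfp_induct_rule[OF monomial_orderingD(4)[OF ord]])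
  case (1 u)
  have F0: "0 \<in> F"
    using F tc_additive_subgroup_iff by blast
  show ?case
  proof (cases "u \<in> normal_words lt G")
    case True
    have "Poly_Mapping.single u c - Poly_Mapping.single u c \<in> I"
      using tc_ideal_closed(1)[OF ideal] by simp
    then show ?thesis
      using combinations_in_single[OF F0 1(2) True] by blast
  next
    case False
    then obtain g w s where g: "g \<in> G" and u: "u = w + LM lt g + s"
      unfolding normal_words_def word_dvd_def by blast
    define K where "K = Poly_Mapping.keys g - {LM lt g}"
    define rest where
      "rest = (\<Sum>v\<in>K. Poly_Mapping.single (w + v + s) (c * Poly_Mapping.lookup g v))"
    have g_nz: "g \<noteq> 0" and LC: "Poly_Mapping.lookup g (LM lt g) = 1"
      using monic g unfolding LC_def by auto
    have mult_in_I: "Poly_Mapping.single w c * g * Poly_Mapping.single s 1 \<in> I"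
      using g G_in_I tc_ideal_closed(5)[OF ideal] by blast
    have expansion: "Poly_Mapping.single w c * g * Poly_Mapping.single s 1
        = Poly_Mapping.single u c + rest"
      unfolding u rest_def K_def by (rule monic_multiple_expansion[OF LM_greatest(1)[OF ord g_nz] LC])
    have "\<exists>h \<in> combinations_in (normal_words lt G) F.
        Poly_Mapping.single (w + v + s) (c * Poly_Mapping.lookup g v) - h \<in> I" if v: "v \<in> K" for v
    proof -
      have "lt (w + v + s) u"
        using v unfolding K_def u by (intro shifted_lower_word[OF ord g_nz]) auto
      moreover have "c * Poly_Mapping.lookup g v \<in> F"
        using F_mult 1(2) g by blast
      ultimately show ?thesis
        by (rule 1(1))
    qed
    then have "\<exists>h \<in> combinations_in (normal_words lt G) F. rest - h \<in> I"
      unfolding rest_def by (rule sum_reduces)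
    then obtain h where h: "h \<in> combinations_in (normal_words lt G) F" "rest - h \<in> I"
      by blast
    have "Poly_Mapping.single u c - (- h)
        = Poly_Mapping.single w c * g * Poly_Mapping.single s 1 - (rest - h)"
      unfolding expansion by simp
    also have "\<dots> \<in> I"
      using tc_ideal_closed(4)[OF ideal mult_in_I h(2)] .
    finally have "Poly_Mapping.single u c - (- h) \<in> I" .
    moreover have "- h \<in> combinations_in (normal_words lt G) F"
      using h(1) combinations_in_additive_subgroup[OF F] tc_additive_subgroup_iff by blast
    ultimately show ?thesis
      by blast
  qed
qed

lemma polynomial_reduces:
  assumes "\<And>u. Poly_Mapping.lookup f u \<in> F"
  shows "\<exists>h \<in> combinations_in (normal_words lt G) F. f - h \<in> I"
proof -
  have "\<exists>h \<in> combinations_in (normal_words lt G) F.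
      (\<Sum>k\<in>Poly_Mapping.keys f. Poly_Mapping.single k (Poly_Mapping.lookup f k)) - h \<in> I"
    by (rule sum_reduces, rule monomial_reduces, rule assms)
  then show ?thesis
    unfolding monomial_expansion[of f, symmetric] .
qed

end

section \<open>The induced filtration on the quotient\<close>

lemma tc_filtrationD:
  fixes FR :: "'g::{monoid_add, linorder} \<Rightarrow> 'r::ring_1 set"
  assumes "exh_filtration (tc_ring :: 'r ring) FR"
  shows "additive_subgroup (FR \<gamma>) (tc_ring :: 'r ring)"
    and "0 \<in> FR \<gamma>"
    and "x \<in> FR \<gamma> \<Longrightarrow> y \<in> FR \<gamma> \<Longrightarrow> x + y \<in> FR \<gamma>"
    and "\<exists>\<gamma>. x \<in> FR \<gamma>"
    and "\<gamma>1 \<le> \<gamma>2 \<Longrightarrow> FR \<gamma>1 \<subseteq> FR \<gamma>2"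
    and "x \<in> FR \<gamma> \<Longrightarrow> y \<in> FR \<tau> \<Longrightarrow> x * y \<in> FR (\<gamma> + \<tau>)"
    and "1 \<in> FR 0"
proof -
  note axioms = assms[unfolded exh_filtration_def]
  show sub: "additive_subgroup (FR \<gamma>) (tc_ring :: 'r ring)"
    using axioms by blast
  then show "0 \<in> FR \<gamma>" "x \<in> FR \<gamma> \<Longrightarrow> y \<in> FR \<gamma> \<Longrightarrow> x + y \<in> FR \<gamma>"
    unfolding tc_additive_subgroup_iff by blast+
  show "\<exists>\<gamma>. x \<in> FR \<gamma>"
    "x \<in> FR \<gamma> \<Longrightarrow> y \<in> FR \<tau> \<Longrightarrow> x * y \<in> FR (\<gamma> + \<tau>)" "1 \<in> FR 0"
    using axioms by auto
  show "\<gamma>1 \<le> \<gamma>2 \<Longrightarrow> FR \<gamma>1 \<subseteq> FR \<gamma>2"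
    using axioms by (cases "\<gamma>1 = \<gamma>2") auto
qed

text \<open>For an exhaustive filtration, the finitely many coefficients of a polynomial
  all lie in a common piece (the largest of their degrees).\<close>

lemma coefficients_in_common_piece:
  fixes FR :: "'g::{monoid_add, linorder} \<Rightarrow> 'r::ring_1 set"
    and f :: "'k \<Rightarrow>\<^sub>0 'r"
  assumes FR: "exh_filtration (tc_ring :: 'r ring) FR"
  shows "\<exists>\<gamma>. \<forall>u. Poly_Mapping.lookup f u \<in> FR \<gamma>"
proof -
  have "\<forall>k. \<exists>\<gamma>. Poly_Mapping.lookup f k \<in> FR \<gamma>"
    using tc_filtrationD(4)[OF FR] by blast
  then obtain deg where deg: "\<And>k. Poly_Mapping.lookup f k \<in> FR (deg k)"
    by metis
  define m where "m = Max (insert 0 (deg ` Poly_Mapping.keys f))"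
  have "Poly_Mapping.lookup f u \<in> FR m" for u
  proof (cases "u \<in> Poly_Mapping.keys f")
    case True
    then have "deg u \<le> m" unfolding m_def by simp
    then show ?thesis using deg tc_filtrationD(5)[OF FR] by blast
  next
    case False
    then show ?thesis
      using tc_filtrationD(2)[OF FR] by (simp add: in_keys_iff)
  qed
  then show ?thesis by blast
qed

context
  fixes lt :: "'v word \<Rightarrow> 'v word \<Rightarrow> bool"
    and G :: "('v, 'r::ring_1) free_alg set"
    and I :: "('v, 'r) free_alg set"
    and FR :: "'g::{monoid_add, linorder} \<Rightarrow> 'r set"
  assumes ord: "monomial_ordering lt"
    and ideal: "ideal I (tc_ring :: ('v, 'r) free_alg ring)"
    and GB: "monic_groebner_basis lt G I"
    and normal_1: "0 \<in> normal_words lt G"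
    and FR: "exh_filtration (tc_ring :: 'r ring) FR"
    and G_R0: "\<forall>g \<in> G. \<forall>w. Poly_Mapping.lookup g w \<in> FR 0"
begin

definition induced :: "'g \<Rightarrow> ('v, 'r) free_alg set set" where
  "induced \<gamma> = (\<lambda>h. I +>\<^bsub>tc_ring :: ('v, 'r) free_alg ring\<^esub> h)
                 ` combinations_in (normal_words lt G) (FR \<gamma>)"

text \<open>Reduction applies to every piece, since F_gamma R * F_0 R \<subseteq> F_gamma R:
  the class of a polynomial with coefficients in F_gamma R lies in F_gamma A.\<close>

lemma class_in_induced:
  assumes "\<And>u. Poly_Mapping.lookup f u \<in> FR \<gamma>"
  shows "I +>\<^bsub>tc_ring :: ('v, 'r) free_alg ring\<^esub> f \<in> induced \<gamma>"
proof -
  have F_mult: "\<forall>c \<in> FR \<gamma>. \<forall>g \<in> G. \<forall>v. c * Poly_Mapping.lookup g v \<in> FR \<gamma>"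
    using G_R0 tc_filtrationD(6)[OF FR] by (metis add_0_right)
  have G_in_I: "G \<subseteq> I" and monic: "\<forall>g \<in> G. g \<noteq> 0 \<and> LC lt g = 1"
    using GB unfolding monic_groebner_basis_def by auto
  have "\<exists>h \<in> combinations_in (normal_words lt G) (FR \<gamma>). f - h \<in> I"
    by (rule polynomial_reduces[OF ord ideal G_in_I monic tc_filtrationD(1)[OF FR] F_mult assms])
  then obtain h where h: "h \<in> combinations_in (normal_words lt G) (FR \<gamma>)" "f - h \<in> I"
    by blast
  then have "I +>\<^bsub>tc_ring :: ('v, 'r) free_alg ring\<^esub> f = I +>\<^bsub>tc_ring :: ('v, 'r) free_alg ring\<^esub> h"
    using tc_coset_eq_iff[OF ideal] by blast
  then show ?thesis
    unfolding induced_def using h(1) by simp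
qed

lemma induced_exhaustive:
  "carrier ((tc_ring :: ('v, 'r) free_alg ring) Quot I) = (\<Union>\<gamma>. induced \<gamma>)"
proof
  show "carrier ((tc_ring :: ('v, 'r) free_alg ring) Quot I) \<subseteq> (\<Union>\<gamma>. induced \<gamma>)"
  proof
    fix x assume "x \<in> carrier ((tc_ring :: ('v, 'r) free_alg ring) Quot I)"
    then obtain f where x: "x = I +>\<^bsub>tc_ring :: ('v, 'r) free_alg ring\<^esub> f"
      unfolding tc_quotient_carrier by blast
    obtain \<gamma> where "\<And>u. Poly_Mapping.lookup f u \<in> FR \<gamma>"
      using coefficients_in_common_piece[OF FR] by blast
    then have "x \<in> induced \<gamma>"
      unfolding x by (rule class_in_induced)
    then show "x \<in> (\<Union>\<gamma>. induced \<gamma>)"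
      by blast
  qed
  show "(\<Union>\<gamma>. induced \<gamma>) \<subseteq> carrier ((tc_ring :: ('v, 'r) free_alg ring) Quot I)"
    unfolding tc_quotient_carrier induced_def by blast
qed

text \<open>F_gamma A * F_tau A \<subseteq> F_(gamma+tau) A: multiply normal representatives and
  reduce the product again.\<close>

lemma induced_mult:
  assumes x: "x \<in> induced \<gamma>" and y: "y \<in> induced \<tau>"
  shows "x \<otimes>\<^bsub>(tc_ring :: ('v, 'r) free_alg ring) Quot I\<^esub> y \<in> induced (\<gamma> + \<tau>)"
proof -
  let ?cls = "\<lambda>h. I +>\<^bsub>tc_ring :: ('v, 'r) free_alg ring\<^esub> h"
  obtain p where p: "p \<in> combinations_in (normal_words lt G) (FR \<gamma>)" "x = ?cls p"
    using x unfolding induced_def by blast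
  obtain q where q: "q \<in> combinations_in (normal_words lt G) (FR \<tau>)" "y = ?cls q"
    using y unfolding induced_def by blast
  have product: "x \<otimes>\<^bsub>(tc_ring :: ('v, 'r) free_alg ring) Quot I\<^esub> y = ?cls (p * q)"
    using ring_hom_mult[OF ring_hom_ring.homh[OF ideal.rcos_ring_hom_ring[OF ideal]], of p q]
    unfolding p(2) q(2) by simp
  have "Poly_Mapping.lookup (p * q) u \<in> FR (\<gamma> + \<tau>)" for u
  proof (rule lookup_mult_in)
    show "0 \<in> FR (\<gamma> + \<tau>)" "\<And>a b. a \<in> FR (\<gamma> + \<tau>) \<Longrightarrow> b \<in> FR (\<gamma> + \<tau>) \<Longrightarrow> a + b \<in> FR (\<gamma> + \<tau>)"
      by (rule tc_filtrationD(2,3)[OF FR])+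
    show "\<And>a b. a \<in> FR \<gamma> \<Longrightarrow> b \<in> FR \<tau> \<Longrightarrow> a * b \<in> FR (\<gamma> + \<tau>)"
      by (rule tc_filtrationD(6)[OF FR])
    show "\<And>u. Poly_Mapping.lookup p u \<in> FR \<gamma>" "\<And>u. Poly_Mapping.lookup q u \<in> FR \<tau>"
      using p(1) q(1) unfolding combinations_in_def by blast+
  qed
  then have "?cls (p * q) \<in> induced (\<gamma> + \<tau>)"
    by (rule class_in_induced)
  with product show ?thesis
    by simp
qed

lemma induced_filtration:
  "exh_filtration ((tc_ring :: ('v, 'r) free_alg ring) Quot I) induced"
  unfolding exh_filtration_def
proof (intro conjI allI impI ballI)
  show "additive_subgroup (induced \<gamma>) ((tc_ring :: ('v, 'r) free_alg ring) Quot I)" for \<gamma>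
    unfolding induced_def
    by (intro quotient_image_additive_subgroup ideal
        combinations_in_additive_subgroup tc_filtrationD(1)[OF FR])
  show "carrier ((tc_ring :: ('v, 'r) free_alg ring) Quot I) = (\<Union>\<gamma>. induced \<gamma>)"
    by (rule induced_exhaustive)
  show "induced \<gamma>1 \<subseteq> induced \<gamma>2" if "\<gamma>1 < \<gamma>2" for \<gamma>1 \<gamma>2
    unfolding induced_def
    by (intro image_mono combinations_in_mono tc_filtrationD(5)[OF FR]) (use that in simp)
  show "x \<otimes>\<^bsub>(tc_ring :: ('v, 'r) free_alg ring) Quot I\<^esub> y \<in> induced (\<gamma> + \<tau>)"
    if "x \<in> induced \<gamma>" "y \<in> induced \<tau>" for x y \<gamma> \<tau>
    using that by (rule induced_mult)
  have "\<one>\<^bsub>(tc_ring :: ('v, 'r) free_alg ring) Quot I\<^esub>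
      = I +>\<^bsub>tc_ring :: ('v, 'r) free_alg ring\<^esub> Poly_Mapping.single 0 1"
    by (simp add: FactRing_def)
  then show "\<one>\<^bsub>(tc_ring :: ('v, 'r) free_alg ring) Quot I\<^esub> \<in> induced 0"
    unfolding induced_def
    using combinations_in_single[OF tc_filtrationD(2,7)[OF FR] normal_1] by simp
qed

text \<open>The filtration of R is the restriction of the induced one, by independence
  of the normal words modulo I.\<close>

lemma induced_restricts:
  "FR \<gamma> = {r. I +>\<^bsub>tc_ring :: ('v, 'r) free_alg ring\<^esub> Poly_Mapping.single 0 r \<in> induced \<gamma>}"
proof (intro equalityI subsetI CollectI)
  fix r
  show "I +>\<^bsub>tc_ring :: ('v, 'r) free_alg ring\<^esub> Poly_Mapping.single 0 r \<in> induced \<gamma>"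
    if "r \<in> FR \<gamma>"
    unfolding induced_def
    using combinations_in_single[OF tc_filtrationD(2)[OF FR] that normal_1] by (rule imageI)
  assume "r \<in> {r. I +>\<^bsub>tc_ring :: ('v, 'r) free_alg ring\<^esub> Poly_Mapping.single 0 r \<in> induced \<gamma>}"
  then have "I +>\<^bsub>tc_ring :: ('v, 'r) free_alg ring\<^esub> Poly_Mapping.single 0 r
      \<in> (\<lambda>h. I +>\<^bsub>tc_ring :: ('v, 'r) free_alg ring\<^esub> h) ` combinations_in (normal_words lt G) (FR \<gamma>)"
    unfolding induced_def by simp
  then obtain h where cls: "I +>\<^bsub>tc_ring :: ('v, 'r) free_alg ring\<^esub> Poly_Mapping.single 0 r
       = I +>\<^bsub>tc_ring :: ('v, 'r) free_alg ring\<^esub> h"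
    and h: "h \<in> combinations_in (normal_words lt G) (FR \<gamma>)"
    by (rule imageE)
  have in_I: "Poly_Mapping.single 0 r - h \<in> I"
    using tc_coset_eq_iff[OF ideal] cls by simp
  have "Poly_Mapping.keys (Poly_Mapping.single 0 r :: ('v, 'r) free_alg) \<subseteq> normal_words lt G"
    using normal_1 by simp
  then have "Poly_Mapping.keys (Poly_Mapping.single 0 r - h) \<subseteq> normal_words lt G"
    using keys_diff[of "Poly_Mapping.single 0 r" h] h unfolding combinations_in_def by blast
  with in_I have "Poly_Mapping.single 0 r - h = 0"
    by (rule normal_in_ideal_eq_zero[OF ord GB])
  then have "h = Poly_Mapping.single 0 r"
    by simp
  then have "r = Poly_Mapping.lookup h 0"
    by simp
  then show "r \<in> FR \<gamma>"
    using h unfolding combinations_in_def by blast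
qed

end

theorem theorem3p1:
  fixes FR :: "'g::{monoid_add, linorder} \<Rightarrow> 'r::comm_ring_1 set"
    and G :: "('v::finite, 'r) free_alg set"
    and lt :: "'v word \<Rightarrow> 'v word \<Rightarrow> bool"
    and I :: "('v, 'r) free_alg set"
    and FA :: "'g \<Rightarrow> ('v, 'r) free_alg set set"
  assumes Gamma: "totally_ordered_monoid TYPE('g)"
    and FR: "exh_filtration (tc_ring :: 'r ring) FR"
    and G_R0: "\<forall>g \<in> G. \<forall>w. Poly_Mapping.lookup g w \<in> FR 0"
    and I_def: "I = genideal (tc_ring :: ('v, 'r) free_alg ring) G"
    and ord: "monomial_ordering lt"
    and GB: "monic_groebner_basis lt G I"
    and LM_ne1: "\<forall>g \<in> G. LM lt g \<noteq> 0"
    and FA_def: "\<And>\<gamma>. FA \<gamma> =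
       {a. \<exists>(k::nat) c w. (\<forall>i<k. c i \<in> FR \<gamma> \<and> w i \<in> normal_words lt G) \<and>
           a = I +>\<^bsub>(tc_ring :: ('v, 'r) free_alg ring)\<^esub>
                 (\<Sum>i<k. Poly_Mapping.single (w i) (c i))}"
  shows "exh_filtration ((tc_ring :: ('v, 'r) free_alg ring) Quot I) FA \<and>
         (\<forall>\<gamma>. FR \<gamma> = {r. I +>\<^bsub>(tc_ring :: ('v, 'r) free_alg ring)\<^esub> Poly_Mapping.single 0 r \<in> FA \<gamma>})"
proof -
  have ideal: "ideal I (tc_ring :: ('v, 'r) free_alg ring)"
    unfolding I_def by (rule ring.genideal_ideal[OF tc_ring_is_ring]) simp
  have normal_1: "0 \<in> normal_words lt G"
    using LM_ne1 by (rule empty_word_normal)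
  have "FA \<gamma> = induced lt G I FR \<gamma>" for \<gamma>
    unfolding FA_def induced_def[OF ord ideal GB normal_1 FR G_R0]
    by (rule indexed_sums_eq_combinations_in) (rule tc_filtrationD(2,3)[OF FR])+
  then have FA: "FA = induced lt G I FR"
    by blast
  have "\<forall>\<gamma>. FR \<gamma> = {r. I +>\<^bsub>tc_ring :: ('v, 'r) free_alg ring\<^esub> Poly_Mapping.single 0 r \<in> FA \<gamma>}"
    unfolding FA by (intro allI) (rule induced_restricts[OF ord ideal GB normal_1 FR G_R0])
  with induced_filtration[OF ord ideal GB normal_1 FR G_R0] show ?thesis
    unfolding FA by (rule conjI)
qed

end
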